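(* Let $(P,\le,A_1\ldots A_k)$ be a regular poset of width $w$ with node tree $(\mathcal{N},\prec)$, and let $\mathcal{F}\subseteq\mathcal{N}$ be ancestor-free. Then the edge poset $(\mathcal{F}_E,\le_E)$ has width at most $w^3$.
   Context: Let $(P,\le)$ be a finite poset of width $w$. For $A\subseteq P$ let $A{\uparrow}=\{y: x\le y\text{ for some }x\in A\}$, $A{\downarrow}=\{y: y\le x\text{ for some }x\in A\}$. For maximal antichains $A,B$ write $A\sqsubseteq B$ if $A\subseteq B{\downarrow}$, and $A\sqsubset B$ if also $A\ne B$. For disjoint antichains $A\sqsubset B$, $(A,B,<)$ is the bipartite graph with classes $A,B$ and edges $(a<b)$ for $a\in A,b\in B$, $a<b$; it is regular if every edge lies in a perfect matching. A regular poset $(P,\le,A_1\ldots A_k)$: $A_1,\dots,A_k$ are maximum antichains partitioning $P$, $(\{A_1,\dots,A_k\},\sqsubseteq)$ is a linear order with minimum $A_1$ and maximum $A_2$, $a<b$ for all $a\in A_1,b\in A_2$, and for every $t\in[2,k]$ and every $A_p\sqsubset A_s$ consecutive in $(\{A_1,\dots,A_t\},\sqsubseteq)$ the graph $(A_p,A_s,<)$ is regular. A node is a bipartite graph $(X,Y,<)$ where, for some such consecutive pair $A_p\sqsubset A_s$ (at some stage $t$), $X\subseteq A_p$, $Y\subseteq A_s$ and $X\cup Y$ is the vertex set of a connected component of $(A_p,A_s,<)$; $\mathrm{Int}(X,Y,<)=X{\uparrow}\cap Y{\downarrow}$. Node tree $(\mathcal{N},\prec)$: $\mathcal{N}$ is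 the set of all nodes; when for $t\ge3$ the antichain $A_t$ is inserted between $A_p\sqsubset A_s$ consecutive at stage $t-1$, each node $M$ of $(A_p,A_t,<)$ or $(A_t,A_s,<)$ is a child of the unique node $N$ of $(A_p,A_s,<)$ with $\mathrm{Int}(M)\subset\mathrm{Int}(N)$; this is a rooted tree with root $(A_1,A_2,<)$. A set $\mathcal{F}\subseteq\mathcal{N}$ is ancestor-free if no node of $\mathcal{F}$ is a descendant of another node of $\mathcal{F}$. For $\mathcal{F}\subseteq\mathcal{N}$, $\mathcal{F}_E$ is the set of all edges $(a<b)$ of nodes in $\mathcal{F}$, and the edge poset $(\mathcal{F}_E,\le_E)$ is the partial order in which for distinct edges $(a<b)<_E(c<d)$ iff $b\le c$. *)

theory Defs
  imports Main
begin

definition less_of :: "('a \<Rightarrow> 'a \<Rightarrow> bool) \<Rightarrow> 'a \<Rightarrow> 'a \<Rightarrow> bool" where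
  "less_of le x y \<longleftrightarrow> le x y \<and> x \<noteq> y"

definition finite_poset :: "'a set \<Rightarrow> ('a \<Rightarrow> 'a \<Rightarrow> bool) \<Rightarrow> bool" where
  "finite_poset P le \<longleftrightarrow> finite P \<and> (\<forall>x\<in>P. le x x)
     \<and> (\<forall>x\<in>P. \<forall>y\<in>P. le x y \<and> le y x \<longrightarrow> x = y)
     \<and> (\<forall>x\<in>P. \<forall>y\<in>P. \<forall>z\<in>P. le x y \<and> le y z \<longrightarrow> le x z)"

definition antichain_on :: "'b set \<Rightarrow> ('b \<Rightarrow> 'b \<Rightarrow> bool) \<Rightarrow> 'b set \<Rightarrow> bool" where
  "antichain_on S le C \<longleftrightarrow> C \<subseteq> S \<and> (\<forall>x\<in>C. \<forall>y\<in>C. le x y \<longrightarrow> x = y)"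

definition width :: "'b set \<Rightarrow> ('b \<Rightarrow> 'b \<Rightarrow> bool) \<Rightarrow> nat" where
  "width S le = Max {card C | C. antichain_on S le C}"

definition maximum_antichain :: "'a set \<Rightarrow> ('a \<Rightarrow> 'a \<Rightarrow> bool) \<Rightarrow> 'a set \<Rightarrow> bool" where
  "maximum_antichain P le C \<longleftrightarrow> antichain_on P le C \<and> card C = width P le"

definition up_set :: "'a set \<Rightarrow> ('a \<Rightarrow> 'a \<Rightarrow> bool) \<Rightarrow> 'a set \<Rightarrow> 'a set" where
  "up_set P le S = {y\<in>P. \<exists>x\<in>S. le x y}"

definition down_set :: "'a set \<Rightarrow> ('a \<Rightarrow> 'a \<Rightarrow> bool) \<Rightarrow> 'a set \<Rightarrow> 'a set" where
  "down_set P le S = {y\<in>P. \<exists>x\<in>S. le y x}"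

definition sqle :: "'a set \<Rightarrow> ('a \<Rightarrow> 'a \<Rightarrow> bool) \<Rightarrow> 'a set \<Rightarrow> 'a set \<Rightarrow> bool" where
  "sqle P le A B \<longleftrightarrow> A \<subseteq> down_set P le B"

definition sqlt :: "'a set \<Rightarrow> ('a \<Rightarrow> 'a \<Rightarrow> bool) \<Rightarrow> 'a set \<Rightarrow> 'a set \<Rightarrow> bool" where
  "sqlt P le A B \<longleftrightarrow> sqle P le A B \<and> A \<noteq> B"

definition bip_regular :: "('a \<Rightarrow> 'a \<Rightarrow> bool) \<Rightarrow> 'a set \<Rightarrow> 'a set \<Rightarrow> bool" where
  "bip_regular le X Y \<longleftrightarrow> (\<forall>a\<in>X. \<forall>b\<in>Y. less_of le a b \<longrightarrow>
     (\<exists>f. bij_betw f X Y \<and> (\<forall>x\<in>X. less_of le x (f x)) \<and> f a = b))"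

definition consec :: "'a set \<Rightarrow> ('a \<Rightarrow> 'a \<Rightarrow> bool) \<Rightarrow> (nat \<Rightarrow> 'a set) \<Rightarrow> nat \<Rightarrow> nat \<Rightarrow> nat \<Rightarrow> bool" where
  "consec P le A t p s \<longleftrightarrow> p \<in> {1..t} \<and> s \<in> {1..t} \<and> sqlt P le (A p) (A s)
     \<and> \<not> (\<exists>q\<in>{1..t}. sqlt P le (A p) (A q) \<and> sqlt P le (A q) (A s))"

definition regular_poset :: "'a set \<Rightarrow> ('a \<Rightarrow> 'a \<Rightarrow> bool) \<Rightarrow> (nat \<Rightarrow> 'a set) \<Rightarrow> nat \<Rightarrow> bool" where
  "regular_poset P le A k \<longleftrightarrow>
     finite_poset P le \<and> 2 \<le> k
     \<and> (\<forall>i\<in>{1..k}. maximum_antichain P le (A i))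
     \<and> (\<forall>i\<in>{1..k}. A i \<noteq> {})
     \<and> (\<forall>i\<in>{1..k}. \<forall>j\<in>{1..k}. i \<noteq> j \<longrightarrow> A i \<inter> A j = {})
     \<and> (\<Union>i\<in>{1..k}. A i) = P
     \<and> (\<forall>i\<in>{1..k}. sqle P le (A i) (A i))
     \<and> (\<forall>i\<in>{1..k}. \<forall>j\<in>{1..k}. sqle P le (A i) (A j) \<and> sqle P le (A j) (A i) \<longrightarrow> A i = A j)
     \<and> (\<forall>i\<in>{1..k}. \<forall>j\<in>{1..k}. \<forall>l\<in>{1..k}.
           sqle P le (A i) (A j) \<and> sqle P le (A j) (A l) \<longrightarrow> sqle P le (A i) (A l))
     \<and> (\<forall>i\<in>{1..k}. \<forall>j\<in>{1..k}. sqle P le (A i) (A j) \<or> sqle P le (A j) (A i))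
     \<and> (\<forall>i\<in>{1..k}. sqle P le (A 1) (A i) \<and> sqle P le (A i) (A 2))
     \<and> (\<forall>a\<in>A 1. \<forall>b\<in>A 2. less_of le a b)
     \<and> (\<forall>t\<in>{2..k}. \<forall>p s. consec P le A t p s \<longrightarrow> bip_regular le (A p) (A s))"

text \<open>Adjacency in the bipartite graph (X,Y,<); a node is given by the pair (X',Y') of the
  two sides of a connected component.\<close>
definition bip_adj :: "('a \<Rightarrow> 'a \<Rightarrow> bool) \<Rightarrow> 'a set \<Rightarrow> 'a set \<Rightarrow> 'a \<Rightarrow> 'a \<Rightarrow> bool" where
  "bip_adj le X Y u v \<longleftrightarrow> (u \<in> X \<and> v \<in> Y \<and> less_of le u v) \<or> (v \<in> X \<and> u \<in> Y \<and> less_of le v u)"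

definition is_component :: "('a \<Rightarrow> 'a \<Rightarrow> bool) \<Rightarrow> 'a set \<Rightarrow> 'a set \<Rightarrow> 'a set \<times> 'a set \<Rightarrow> bool" where
  "is_component le X Y N \<longleftrightarrow> (\<exists>v\<in>X \<union> Y.
     fst N = {u. (bip_adj le X Y)\<^sup>*\<^sup>* v u} \<inter> X \<and> snd N = {u. (bip_adj le X Y)\<^sup>*\<^sup>* v u} \<inter> Y)"

definition nodes :: "'a set \<Rightarrow> ('a \<Rightarrow> 'a \<Rightarrow> bool) \<Rightarrow> (nat \<Rightarrow> 'a set) \<Rightarrow> nat \<Rightarrow> ('a set \<times> 'a set) set" where
  "nodes P le A k = {N. \<exists>t\<in>{2..k}. \<exists>p s. consec P le A t p s \<and> is_component le (A p) (A s) N}"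

definition node_int :: "'a set \<Rightarrow> ('a \<Rightarrow> 'a \<Rightarrow> bool) \<Rightarrow> 'a set \<times> 'a set \<Rightarrow> 'a set" where
  "node_int P le N = up_set P le (fst N) \<inter> down_set P le (snd N)"

definition node_child :: "'a set \<Rightarrow> ('a \<Rightarrow> 'a \<Rightarrow> bool) \<Rightarrow> (nat \<Rightarrow> 'a set) \<Rightarrow> nat
    \<Rightarrow> 'a set \<times> 'a set \<Rightarrow> 'a set \<times> 'a set \<Rightarrow> bool" where
  "node_child P le A k M N \<longleftrightarrow> (\<exists>t\<in>{3..k}. \<exists>p s.
     consec P le A (t - 1) p s \<and> sqlt P le (A p) (A t) \<and> sqlt P le (A t) (A s)
     \<and> (is_component le (A p) (A t) M \<or> is_component le (A t) (A s) M)
     \<and> is_component le (A p) (A s) N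
     \<and> node_int P le M \<subset> node_int P le N)"

definition ancestor_free :: "'a set \<Rightarrow> ('a \<Rightarrow> 'a \<Rightarrow> bool) \<Rightarrow> (nat \<Rightarrow> 'a set) \<Rightarrow> nat
    \<Rightarrow> ('a set \<times> 'a set) set \<Rightarrow> bool" where
  "ancestor_free P le A k F \<longleftrightarrow> F \<subseteq> nodes P le A k
     \<and> (\<forall>M\<in>F. \<forall>N\<in>F. M \<noteq> N \<longrightarrow> \<not> (node_child P le A k)\<^sup>+\<^sup>+ M N)"

definition edge_set :: "('a \<Rightarrow> 'a \<Rightarrow> bool) \<Rightarrow> ('a set \<times> 'a set) set \<Rightarrow> ('a \<times> 'a) set" where
  "edge_set le F = {(a, b). \<exists>N\<in>F. a \<in> fst N \<and> b \<in> snd N \<and> less_of le a b}"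

definition edge_le :: "('a \<Rightarrow> 'a \<Rightarrow> bool) \<Rightarrow> 'a \<times> 'a \<Rightarrow> 'a \<times> 'a \<Rightarrow> bool" where
  "edge_le le e e' \<longleftrightarrow> e = e' \<or> le (snd e) (fst e')"

end

theory Submission
  imports Defs
begin

text \<open>
  Between consecutive levels of a regular poset the comparability graph has a perfect
  matching, so following these matchings upwards from \<open>A\<^sub>1\<close> covers \<open>P\<close> by \<open>w\<close> chains.
  An antichain of the edge poset splits into the \<open>w\<^sup>2\<close> classes of edges whose endpoints lie
  on two given chains.  No edge of \<open>\<F>\<^sub>E\<close> lies nested inside another one: the node of
  the inner edge would have an ancestor at the level pair of the outer edge whose interval
  meets the interval of the outer node, so the two would coincide, contradicting
  ancestor-freeness.  Within a class this orders the edges strictly.  Let \<open>v\<close> be the upper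
  endpoint of the class edge that starts lowest.  The number of elements above \<open>v\<close> in a
  level never decreases from level to level and grows across every edge entering the
  up-set of \<open>v\<close>; evaluated at the level of the upper endpoint, it therefore maps the class
  injectively into \<open>{1..w}\<close>.
\<close>

section \<open>Antichains and width\<close>

lemma finite_posetD:
  assumes "finite_poset P le"
  shows "finite P"
    and "x \<in> P \<Longrightarrow> le x x"
    and "x \<in> P \<Longrightarrow> y \<in> P \<Longrightarrow> le x y \<Longrightarrow> le y x \<Longrightarrow> x = y"
    and "x \<in> P \<Longrightarrow> y \<in> P \<Longrightarrow> z \<in> P \<Longrightarrow> le x y \<Longrightarrow> le y z \<Longrightarrow> le x z"
  using assms unfolding finite_poset_def by blast+

lemma finite_poset_conversep: "finite_poset P le \<Longrightarrow> finite_poset P le\<inverse>\<inverse>"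
  unfolding finite_poset_def by blast

lemma card_le_width:
  assumes "finite S" and "antichain_on S le C"
  shows "card C \<le> width S le"
proof -
  have "{card C | C. antichain_on S le C} \<subseteq> {..card S}"
    using assms(1) by (auto simp: antichain_on_def card_mono)
  then have "finite {card C | C. antichain_on S le C}"
    using finite_subset by blast
  then show ?thesis
    unfolding width_def using assms(2) by (auto intro: Max_ge)
qed

lemma width_le:
  assumes "\<And>C. antichain_on S le C \<Longrightarrow> card C \<le> n"
  shows "width S le \<le> n"
proof -
  have bounded: "{card C | C. antichain_on S le C} \<subseteq> {..n}"
    using assms by auto
  have "antichain_on S le {}"
    unfolding antichain_on_def by blast
  then have "{card C | C. antichain_on S le C} \<noteq> {}"
    by blast
  then show ?thesis
    unfolding width_def using bounded finite_subset[OF bounded]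
    by (intro Max.boundedI) auto
qed

lemma antichain_exchange_above:
  assumes po: "finite_poset P le" and "v \<in> P"
    and X: "antichain_on P le X" and Y: "antichain_on P le Y"
    and XY: "X \<subseteq> down_set P le Y"
  shows "antichain_on P le ((Y - {y \<in> Y. le v y}) \<union> {x \<in> X. le v x})"
  unfolding antichain_on_def
proof (intro conjI ballI impI)
  show "(Y - {y \<in> Y. le v y}) \<union> {x \<in> X. le v x} \<subseteq> P"
    using X Y unfolding antichain_on_def by blast
next
  fix x y
  assume x: "x \<in> (Y - {y \<in> Y. le v y}) \<union> {x \<in> X. le v x}"
    and y: "y \<in> (Y - {y \<in> Y. le v y}) \<union> {x \<in> X. le v x}" and "le x y"
  note trans = finite_posetD(4)[OF po] and antisym = finite_posetD(3)[OF po]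
  have "x \<in> P" "y \<in> P"
    using x y X Y unfolding antichain_on_def by blast+
  show "x = y"
  proof (cases "x \<in> X \<and> le v x")
    case True
    then have "le v y" using trans[OF \<open>v \<in> P\<close> \<open>x \<in> P\<close> \<open>y \<in> P\<close>] \<open>le x y\<close> by blast
    then have "y \<in> X" using y by blast
    then show ?thesis using X True \<open>le x y\<close> unfolding antichain_on_def by blast
  next
    case False
    then have "x \<in> Y" using x by blast
    show ?thesis
    proof (cases "y \<in> X")
      case True
      then obtain y' where "y' \<in> Y" "le y y'"
        using XY unfolding down_set_def by blast
      then have "le x y'" using trans[OF \<open>x \<in> P\<close> \<open>y \<in> P\<close>] Y \<open>le x y\<close>
        unfolding antichain_on_def by blast
      then have "x = y'" using Y \<open>x \<in> Y\<close> \<open>y' \<in> Y\<close> unfolding antichain_on_def by blast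
      then show ?thesis
        using antisym[OF \<open>x \<in> P\<close> \<open>y \<in> P\<close>] \<open>le x y\<close> \<open>le y y'\<close> by blast
    next
      case False
      then show ?thesis using Y \<open>x \<in> Y\<close> y \<open>le x y\<close> unfolding antichain_on_def by blast
    qed
  qed
qed

lemma card_above_mono:
  assumes po: "finite_poset P le" and "v \<in> P"
    and X: "antichain_on P le X" and Y: "maximum_antichain P le Y"
    and XY: "X \<subseteq> down_set P le Y"
  shows "card {x \<in> X. le v x} \<le> card {y \<in> Y. le v y}"
proof -
  let ?UX = "{x \<in> X. le v x}" and ?UY = "{y \<in> Y. le v y}"
  have fin: "finite Y" "finite ?UX"
    using finite_posetD(1)[OF po] X Y unfolding maximum_antichain_def antichain_on_def
    by (auto intro: finite_subset)
  have "card ((Y - ?UY) \<union> ?UX) \<le> card Y"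
    using card_le_width[OF finite_posetD(1)[OF po]] antichain_exchange_above[OF po \<open>v \<in> P\<close> X _ XY] Y
    unfolding maximum_antichain_def by auto
  moreover have "card ((Y - ?UY) \<union> ?UX) = card (Y - ?UY) + card ?UX"
    using fin by (intro card_Un_disjoint) auto
  moreover have "card (Y - ?UY) = card Y - card ?UY" "card ?UY \<le> card Y"
    using fin by (auto intro: card_Diff_subset card_mono finite_subset)
  ultimately show ?thesis by linarith
qed

lemma card_above_less_along_matching:
  assumes po: "finite_poset P le" and "v \<in> P" "X \<subseteq> P" "Y \<subseteq> P"
    and f: "bij_betw f X Y" "\<forall>x\<in>X. le x (f x)"
    and a: "a \<in> X" "\<not> le v a" "le v (f a)"
  shows "card {x \<in> X. le v x} < card {y \<in> Y. le v y}"
proof -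
  let ?UX = "{x \<in> X. le v x}" and ?UY = "{y \<in> Y. le v y}"
  have "f ` ?UX \<subseteq> ?UY"
  proof
    fix y assume "y \<in> f ` ?UX"
    then obtain x where "x \<in> X" "le v x" "y = f x" by blast
    then have "f x \<in> Y" "le x (f x)" using f unfolding bij_betw_def by auto
    then show "y \<in> ?UY"
      using finite_posetD(4)[OF po, of v x "f x"] \<open>v \<in> P\<close> \<open>X \<subseteq> P\<close> \<open>Y \<subseteq> P\<close> \<open>x \<in> X\<close> \<open>le v x\<close> \<open>y = f x\<close>
      by blast
  qed
  moreover have "f a \<in> ?UY - f ` ?UX"
    using f a unfolding bij_betw_def inj_on_def by blast
  ultimately have "f ` ?UX \<subset> ?UY" by blast
  moreover have "finite ?UY"
    using finite_posetD(1)[OF po] \<open>Y \<subseteq> P\<close> by (auto intro: finite_subset)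
  moreover have "card (f ` ?UX) = card ?UX"
    using f(1) unfolding bij_betw_def by (auto intro: card_image inj_on_subset)
  ultimately show ?thesis
    using psubset_card_mono[of ?UY "f ` ?UX"] by simp
qed

section \<open>Components of bipartite comparability graphs\<close>

definition component_of :: "('a \<Rightarrow> 'a \<Rightarrow> bool) \<Rightarrow> 'a set \<Rightarrow> 'a set \<Rightarrow> 'a \<Rightarrow> 'a set \<times> 'a set" where
  "component_of le X Y v = ({u. (bip_adj le X Y)\<^sup>*\<^sup>* v u} \<inter> X, {u. (bip_adj le X Y)\<^sup>*\<^sup>* v u} \<inter> Y)"

lemma is_component_iff: "is_component le X Y N \<longleftrightarrow> (\<exists>v\<in>X \<union> Y. N = component_of le X Y v)"
  by (auto simp: is_component_def component_of_def prod_eq_iff)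

lemma bip_adj_sym: "bip_adj le X Y u v \<Longrightarrow> bip_adj le X Y v u"
  unfolding bip_adj_def by blast

lemma less_of_conversep [simp]: "less_of le\<inverse>\<inverse> x y \<longleftrightarrow> less_of le y x"
  unfolding less_of_def by auto

lemma bip_adj_conversep: "bip_adj le\<inverse>\<inverse> Y X = bip_adj le X Y"
  unfolding bip_adj_def by (intro ext) auto

lemma component_of_eq:
  assumes "(bip_adj le X Y)\<^sup>*\<^sup>* v v'"
  shows "component_of le X Y v = component_of le X Y v'"
proof -
  have "symp (bip_adj le X Y)\<^sup>*\<^sup>*"
    using symp_rtranclp[of "bip_adj le X Y"] bip_adj_sym by (metis sympI)
  then have "(bip_adj le X Y)\<^sup>*\<^sup>* v' v"
    using assms by (blast dest: sympD)
  then show ?thesis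
    using assms unfolding component_of_def by (auto intro: rtranclp_trans)
qed

lemma is_component_subset: "is_component le X Y N \<Longrightarrow> fst N \<subseteq> X \<and> snd N \<subseteq> Y"
  unfolding is_component_def by auto

lemma is_component_closed:
  assumes "is_component le X Y N" "u \<in> fst N \<union> snd N" "bip_adj le X Y u u'"
  shows "u' \<in> fst N \<union> snd N"
proof -
  obtain v where "N = component_of le X Y v"
    using assms(1) unfolding is_component_iff by blast
  moreover have "u' \<in> X \<union> Y"
    using assms(3) unfolding bip_adj_def by blast
  ultimately show ?thesis
    using assms(2,3) unfolding component_of_def by (auto intro: rtranclp.rtrancl_into_rtrancl)
qed

lemma is_component_unique:
  assumes "is_component le X Y N1" "is_component le X Y N2"
    and "u \<in> fst N1 \<union> snd N1" "u \<in> fst N2 \<union> snd N2"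
  shows "N1 = N2"
proof -
  obtain v1 v2 where "N1 = component_of le X Y v1" "N2 = component_of le X Y v2"
    using assms(1,2) unfolding is_component_iff by blast
  moreover have "(bip_adj le X Y)\<^sup>*\<^sup>* v1 u" "(bip_adj le X Y)\<^sup>*\<^sup>* v2 u"
    using assms(3,4) calculation unfolding component_of_def by auto
  ultimately show ?thesis
    using component_of_eq by metis
qed

lemma is_component_from_left:
  assumes "is_component le X Y N" and "\<forall>y\<in>Y. \<exists>x\<in>X. less_of le x y"
  obtains x where "x \<in> X" and "N = component_of le X Y x"
proof -
  obtain v where v: "v \<in> X \<union> Y" "N = component_of le X Y v"
    using assms(1) unfolding is_component_iff by blast
  then obtain x where "x \<in> X" "(bip_adj le X Y)\<^sup>*\<^sup>* v x"
    using assms(2) unfolding bip_adj_def by blast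
  then show ?thesis
    using that v component_of_eq by metis
qed

lemma component_of_conversep:
  "component_of le\<inverse>\<inverse> Y X v = prod.swap (component_of le X Y v)"
  unfolding component_of_def bip_adj_conversep by simp

lemma is_component_conversep:
  "is_component le\<inverse>\<inverse> Y X (prod.swap N) \<longleftrightarrow> is_component le X Y N"
  unfolding is_component_iff component_of_conversep by (metis Un_commute swap_swap)

lemma mem_node_int:
  "z \<in> node_int P le N \<longleftrightarrow> z \<in> P \<and> (\<exists>x\<in>fst N. le x z) \<and> (\<exists>y\<in>snd N. le z y)"
  unfolding node_int_def up_set_def down_set_def by blast

lemma node_int_conversep: "node_int P le\<inverse>\<inverse> (prod.swap N) = node_int P le N"
  unfolding mem_node_int set_eq_iff by auto

lemma node_int_disjoint:
  assumes po: "finite_poset P le" and "X \<subseteq> P" "Y \<subseteq> P" "X \<inter> Y = {}"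
    and N: "is_component le X Y N1" "is_component le X Y N2"
    and z: "z \<in> node_int P le N1" "z \<in> node_int P le N2"
  shows "N1 = N2"
proof -
  obtain x y where "x \<in> fst N1" "le x z" "y \<in> snd N2" "le z y" "z \<in> P"
    using z unfolding mem_node_int by blast
  moreover have "x \<in> X" "y \<in> Y"
    using calculation is_component_subset[OF N(1)] is_component_subset[OF N(2)] by blast+
  ultimately have "bip_adj le X Y x y"
    using finite_posetD(4)[OF po, of x z y] assms(2-4)
    unfolding bip_adj_def less_of_def by blast
  then have "y \<in> fst N1 \<union> snd N1"
    using is_component_closed[OF N(1)] \<open>x \<in> fst N1\<close> by blast
  then show ?thesis
    using is_component_unique[OF N] \<open>y \<in> snd N2\<close> by blast
qed

lemma node_int_psubset_of_descendant:
  "(node_child P le A k)\<^sup>+\<^sup>+ M N \<Longrightarrow> node_int P le M \<subset> node_int P le N"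
  by (induction rule: tranclp_induct) (auto simp: node_child_def)

lemma reachable_across_middle_level:
  assumes po: "finite_poset P le" and sub: "X \<subseteq> P" "M \<subseteq> P" "Y \<subseteq> P"
    and disj: "X \<inter> M = {}" "X \<inter> Y = {}" "M \<inter> Y = {}"
    and MY: "\<forall>y\<in>M. \<exists>z\<in>Y. le y z"
    and "x0 \<in> X" and "(bip_adj le X M)\<^sup>*\<^sup>* x0 u"
  shows "(u \<in> X \<longrightarrow> (bip_adj le X Y)\<^sup>*\<^sup>* x0 u)
    \<and> (u \<in> M \<longrightarrow> (\<forall>z\<in>Y. le u z \<longrightarrow> (bip_adj le X Y)\<^sup>*\<^sup>* x0 z))"
  using assms(10)
proof (induction rule: rtranclp_induct)
  case base
  then show ?case using \<open>x0 \<in> X\<close> disj by blast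
next
  case (step u u')
  note trans = finite_posetD(4)[OF po]
  have reach: "(bip_adj le X Y)\<^sup>*\<^sup>* x0 z"
    if "x \<in> X" "(bip_adj le X Y)\<^sup>*\<^sup>* x0 x" "y \<in> M" "less_of le x y" "z \<in> Y" "le y z" for x y z
  proof -
    have "le x z" "x \<noteq> z"
      using that sub disj trans[of x y z] unfolding less_of_def by blast+
    then have "bip_adj le X Y x z"
      using that unfolding bip_adj_def less_of_def by blast
    with that(2) show ?thesis by (rule rtranclp.rtrancl_into_rtrancl)
  qed
  from step.hyps(2) consider
      "u \<in> X" "u' \<in> M" "less_of le u u'"
    | "u' \<in> X" "u \<in> M" "less_of le u' u"
    unfolding bip_adj_def by blast
  then show ?case
  proof cases
    case 1
    have "\<forall>z\<in>Y. le u' z \<longrightarrow> (bip_adj le X Y)\<^sup>*\<^sup>* x0 z"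
      using reach[of u u'] step.IH 1 by blast
    then show ?thesis using 1 disj by blast
  next
    case 2
    then obtain z where "z \<in> Y" "le u z" using MY by blast
    then have "(bip_adj le X Y)\<^sup>*\<^sup>* x0 z" using step.IH 2 by blast
    moreover have "bip_adj le X Y z u'"
      using 2 \<open>z \<in> Y\<close> \<open>le u z\<close> sub disj trans[of u' u z]
      unfolding bip_adj_def less_of_def by blast
    ultimately show ?thesis
      using 2 disj by (blast intro: rtranclp.rtrancl_into_rtrancl)
  qed
qed

lemma upper_level_outside_node_int:
  assumes po: "finite_poset P le" and sub: "M \<subseteq> P" "Y \<subseteq> P" and "M \<inter> Y = {}"
    and MY: "\<forall>y\<in>M. \<exists>z\<in>Y. le y z"
    and Y_anti: "\<forall>z\<in>Y. \<forall>z'\<in>Y. le z z' \<longrightarrow> z = z'"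
    and "snd N \<subseteq> M" and "z \<in> Y"
  shows "z \<notin> node_int P le N"
proof
  assume "z \<in> node_int P le N"
  then obtain y where "y \<in> M" "le z y"
    using \<open>snd N \<subseteq> M\<close> unfolding mem_node_int by blast
  moreover obtain z' where "z' \<in> Y" "le y z'"
    using MY \<open>y \<in> M\<close> by blast
  ultimately have "z = z'"
    using Y_anti \<open>z \<in> Y\<close> sub finite_posetD(4)[OF po, of z y z'] by blast
  then have "z = y"
    using finite_posetD(3)[OF po] \<open>le z y\<close> \<open>le y z'\<close> \<open>y \<in> M\<close> \<open>z \<in> Y\<close> sub by blast
  then show False
    using \<open>y \<in> M\<close> \<open>z \<in> Y\<close> \<open>M \<inter> Y = {}\<close> by blast
qed

lemma parent_component_left:
  assumes po: "finite_poset P le" and sub: "X \<subseteq> P" "M \<subseteq> P" "Y \<subseteq> P"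
    and disj: "X \<inter> M = {}" "X \<inter> Y = {}" "M \<inter> Y = {}"
    and XM: "\<forall>x\<in>X. \<exists>y\<in>M. less_of le x y" "\<forall>y\<in>M. \<exists>x\<in>X. less_of le x y"
    and MY: "\<forall>y\<in>M. \<exists>z\<in>Y. le y z"
    and Y_anti: "\<forall>z\<in>Y. \<forall>z'\<in>Y. le z z' \<longrightarrow> z = z'"
    and N': "is_component le X M N'"
  shows "\<exists>N. is_component le X Y N \<and> node_int P le N' \<subset> node_int P le N"
proof -
  note trans = finite_posetD(4)[OF po] and refl = finite_posetD(2)[OF po]
  obtain x0 where "x0 \<in> X" and N'_eq: "N' = component_of le X M x0"
    using is_component_from_left[OF N' XM(2)] .
  define N where "N = component_of le X Y x0"
  have N: "is_component le X Y N"
    unfolding N_def is_component_iff using \<open>x0 \<in> X\<close> by blast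
  have reach: "(u \<in> X \<longrightarrow> u \<in> fst N)
      \<and> (u \<in> M \<longrightarrow> (\<forall>z\<in>Y. le u z \<longrightarrow> z \<in> snd N))" if "u \<in> fst N' \<union> snd N'" for u
    using that reachable_across_middle_level[OF po sub disj MY \<open>x0 \<in> X\<close>, of u]
    unfolding N'_eq N_def component_of_def by auto
  have "node_int P le N' \<subseteq> node_int P le N"
  proof
    fix c assume "c \<in> node_int P le N'"
    then obtain x y where "x \<in> fst N'" "le x c" "y \<in> snd N'" "le c y" "c \<in> P"
      unfolding mem_node_int by blast
    moreover obtain z where "z \<in> Y" "le y z"
      using MY \<open>y \<in> snd N'\<close> is_component_subset[OF N'] by blast
    ultimately show "c \<in> node_int P le N"
      using reach[of x] reach[of y] is_component_subset[OF N'] sub trans[of c y z]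
      unfolding mem_node_int by blast
  qed
  moreover obtain y z where y: "y \<in> M" "less_of le x0 y" and z: "z \<in> Y" "le y z"
    using XM(1) MY \<open>x0 \<in> X\<close> by blast
  have "x0 \<in> fst N'"
    unfolding N'_eq component_of_def using \<open>x0 \<in> X\<close> by simp
  then have "y \<in> snd N'"
    using is_component_closed[OF N', of x0 y] y disj unfolding bip_adj_def N'_eq component_of_def
    by auto
  then have "z \<in> node_int P le N"
    using reach[of x0] reach[of y] \<open>x0 \<in> fst N'\<close> y z sub \<open>x0 \<in> X\<close> refl trans[of x0 y z]
    unfolding mem_node_int less_of_def by blast
  moreover have "z \<notin> node_int P le N'"
    using upper_level_outside_node_int[OF po sub(2,3) disj(3) MY Y_anti _ z(1)]
      is_component_subset[OF N'] by blast
  ultimately show ?thesis using N by blast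
qed

lemma parent_component_right:
  assumes po: "finite_poset P le" and sub: "X \<subseteq> P" "M \<subseteq> P" "Y \<subseteq> P"
    and disj: "X \<inter> M = {}" "X \<inter> Y = {}" "M \<inter> Y = {}"
    and MY: "\<forall>y\<in>M. \<exists>z\<in>Y. less_of le y z" "\<forall>z\<in>Y. \<exists>y\<in>M. less_of le y z"
    and XM: "\<forall>y\<in>M. \<exists>x\<in>X. le x y"
    and X_anti: "\<forall>x\<in>X. \<forall>x'\<in>X. le x x' \<longrightarrow> x = x'"
    and N': "is_component le M Y N'"
  shows "\<exists>N. is_component le X Y N \<and> node_int P le N' \<subset> node_int P le N"
proof -
  have "Y \<inter> M = {}" "Y \<inter> X = {}" "M \<inter> X = {}"
    using disj by blast+
  moreover have "\<forall>z\<in>Y. \<exists>y\<in>M. less_of le\<inverse>\<inverse> z y" "\<forall>y\<in>M. \<exists>z\<in>Y. less_of le\<inverse>\<inverse> z y"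
    and "\<forall>y\<in>M. \<exists>x\<in>X. le\<inverse>\<inverse> y x" and "\<forall>x\<in>X. \<forall>x'\<in>X. le\<inverse>\<inverse> x x' \<longrightarrow> x = x'"
    using MY XM X_anti by auto
  moreover have "is_component le\<inverse>\<inverse> Y M (prod.swap N')"
    using N' is_component_conversep by blast
  ultimately obtain N where N: "is_component le\<inverse>\<inverse> Y X N"
    "node_int P le\<inverse>\<inverse> (prod.swap N') \<subset> node_int P le\<inverse>\<inverse> N"
    using parent_component_left[OF finite_poset_conversep[OF po] sub(3,2,1)] by blast
  have "is_component le X Y (prod.swap N)"
    using N(1) is_component_conversep[of le Y X "prod.swap N"] by simp
  moreover have "node_int P le N' \<subset> node_int P le (prod.swap N)"
    using N(2) node_int_conversep[of P le N'] node_int_conversep[of P le "prod.swap N"] by simp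
  ultimately show ?thesis by blast
qed

section \<open>The levels of a regular poset\<close>

locale regular_levels =
  fixes P :: "'a set" and le :: "'a \<Rightarrow> 'a \<Rightarrow> bool" and A :: "nat \<Rightarrow> 'a set" and k :: nat
  assumes poset: "finite_poset P le"
    and two_le_k: "2 \<le> k"
    and levels_maximum: "\<forall>i\<in>{1..k}. maximum_antichain P le (A i)"
    and levels_nonempty: "\<forall>i\<in>{1..k}. A i \<noteq> {}"
    and levels_disjoint: "\<forall>i\<in>{1..k}. \<forall>j\<in>{1..k}. i \<noteq> j \<longrightarrow> A i \<inter> A j = {}"
    and levels_cover: "(\<Union>i\<in>{1..k}. A i) = P"
    and levels_refl: "\<forall>i\<in>{1..k}. sqle P le (A i) (A i)"
    and levels_antisym: "\<forall>i\<in>{1..k}. \<forall>j\<in>{1..k}.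
      sqle P le (A i) (A j) \<and> sqle P le (A j) (A i) \<longrightarrow> A i = A j"
    and levels_trans: "\<forall>i\<in>{1..k}. \<forall>j\<in>{1..k}. \<forall>l\<in>{1..k}.
      sqle P le (A i) (A j) \<and> sqle P le (A j) (A l) \<longrightarrow> sqle P le (A i) (A l)"
    and levels_total: "\<forall>i\<in>{1..k}. \<forall>j\<in>{1..k}. sqle P le (A i) (A j) \<or> sqle P le (A j) (A i)"
    and levels_bounds: "\<forall>i\<in>{1..k}. sqle P le (A 1) (A i) \<and> sqle P le (A i) (A 2)"
    and bottom_below_top: "\<forall>a\<in>A 1. \<forall>b\<in>A 2. less_of le a b" \<comment> \<open>not needed for the width bound\<close>
    and levels_regular: "\<forall>t\<in>{2..k}. \<forall>p s. consec P le A t p s \<longrightarrow> bip_regular le (A p) (A s)"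

lemma regular_poset_iff_regular_levels: "regular_poset P le A k \<longleftrightarrow> regular_levels P le A k"
  unfolding regular_poset_def regular_levels_def by (simp only: conj_assoc)

context regular_levels
begin

abbreviation w :: nat where "w \<equiv> width P le"
abbreviation lev_le :: "nat \<Rightarrow> nat \<Rightarrow> bool" where "lev_le i j \<equiv> sqle P le (A i) (A j)"
abbreviation lev_lt :: "nat \<Rightarrow> nat \<Rightarrow> bool" where "lev_lt i j \<equiv> sqlt P le (A i) (A j)"

lemmas finite_P = finite_posetD(1)[OF poset]
  and refl_P = finite_posetD(2)[OF poset]
  and antisym_P = finite_posetD(3)[OF poset]
  and trans_P = finite_posetD(4)[OF poset]

lemma level_subset: "i \<in> {1..k} \<Longrightarrow> A i \<subseteq> P"
  using levels_cover by blast

lemma level_antichain: "i \<in> {1..k} \<Longrightarrow> x \<in> A i \<Longrightarrow> y \<in> A i \<Longrightarrow> le x y \<Longrightarrow> x = y"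
  using levels_maximum unfolding maximum_antichain_def antichain_on_def by blast

lemma card_level: "i \<in> {1..k} \<Longrightarrow> card (A i) = w"
  using levels_maximum unfolding maximum_antichain_def by blast

lemma finite_level: "i \<in> {1..k} \<Longrightarrow> finite (A i)"
  using finite_subset[OF level_subset finite_P] .

lemma level_inj: "i \<in> {1..k} \<Longrightarrow> j \<in> {1..k} \<Longrightarrow> A i = A j \<Longrightarrow> i = j"
  using levels_disjoint levels_nonempty by fastforce

lemma lev_le_antisym: "i \<in> {1..k} \<Longrightarrow> j \<in> {1..k} \<Longrightarrow> lev_le i j \<Longrightarrow> lev_le j i \<Longrightarrow> i = j"
  using levels_antisym level_inj by blast

lemma lev_le_trans:
  "i \<in> {1..k} \<Longrightarrow> j \<in> {1..k} \<Longrightarrow> l \<in> {1..k} \<Longrightarrow> lev_le i j \<Longrightarrow> lev_le j l \<Longrightarrow> lev_le i l"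
  using levels_trans by blast

lemma lev_lt_iff: "i \<in> {1..k} \<Longrightarrow> j \<in> {1..k} \<Longrightarrow> lev_lt i j \<longleftrightarrow> lev_le i j \<and> i \<noteq> j"
  unfolding sqlt_def using level_inj by blast

lemma lev_lt_trans:
  assumes "i \<in> {1..k}" "j \<in> {1..k}" "l \<in> {1..k}" "lev_lt i j" "lev_lt j l"
  shows "lev_lt i l"
proof -
  have "lev_le i j" "lev_le j l" "i \<noteq> j"
    using assms lev_lt_iff by blast+
  then have "lev_le i l" "i \<noteq> l"
    using assms(1-3) lev_le_trans lev_le_antisym by blast+
  then show ?thesis using assms(1,3) lev_lt_iff by blast
qed

text \<open>The position of \<open>A i\<close> in the linear order \<open>\<sqsubseteq>\<close>; it turns comparisons of levels
  into arithmetic.\<close>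

definition rank :: "nat \<Rightarrow> nat" where
  "rank i = card {j \<in> {1..k}. lev_lt j i}"

lemma rank_le: "rank i \<le> k"
proof -
  have "rank i \<le> card {1..k}"
    unfolding rank_def by (intro card_mono) auto
  then show ?thesis by simp
qed

lemma rank_less:
  assumes "i \<in> {1..k}" "j \<in> {1..k}" "lev_lt i j"
  shows "rank i < rank j"
proof -
  have "{l \<in> {1..k}. lev_lt l i} \<subseteq> {l \<in> {1..k}. lev_lt l j}"
    using assms lev_lt_trans by blast
  moreover have "i \<in> {l \<in> {1..k}. lev_lt l j} - {l \<in> {1..k}. lev_lt l i}"
    using assms unfolding sqlt_def by blast
  ultimately show ?thesis
    unfolding rank_def by (intro psubset_card_mono) auto
qed

lemma lev_le_iff_rank:
  assumes "i \<in> {1..k}" "j \<in> {1..k}"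
  shows "lev_le i j \<longleftrightarrow> rank i \<le> rank j"
proof
  assume "lev_le i j"
  then show "rank i \<le> rank j"
    using assms rank_less[of i j] lev_lt_iff by fastforce
next
  assume "rank i \<le> rank j"
  then have "\<not> lev_lt j i"
    using assms rank_less[of j i] by linarith
  then show "lev_le i j"
    using assms levels_total lev_lt_iff levels_refl by blast
qed

lemma rank_eq_iff: "i \<in> {1..k} \<Longrightarrow> j \<in> {1..k} \<Longrightarrow> rank i = rank j \<longleftrightarrow> i = j"
  using lev_le_iff_rank lev_le_antisym by (metis order_refl)

lemma lev_lt_iff_rank:
  assumes "i \<in> {1..k}" "j \<in> {1..k}"
  shows "lev_lt i j \<longleftrightarrow> rank i < rank j"
  using lev_lt_iff[OF assms] lev_le_iff_rank[OF assms] rank_eq_iff[OF assms] by auto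

lemma lev_le_exists_above: "lev_le i j \<Longrightarrow> x \<in> A i \<Longrightarrow> \<exists>y\<in>A j. le x y"
  unfolding sqle_def down_set_def by blast

lemma lev_le_of_le:
  assumes i: "i \<in> {1..k}" and j: "j \<in> {1..k}" and "p \<in> A i" "q \<in> A j" "le p q"
  shows "lev_le i j"
proof (rule ccontr)
  assume "\<not> lev_le i j"
  then have "lev_le j i" "i \<noteq> j"
    using levels_total levels_refl i j by blast+
  then obtain q' where "q' \<in> A i" "le q q'"
    using lev_le_exists_above \<open>q \<in> A j\<close> by blast
  then have "le p q'"
    using trans_P[of p q q'] assms level_subset by blast
  then have "p = q'"
    using level_antichain[OF i] \<open>p \<in> A i\<close> \<open>q' \<in> A i\<close> by blast
  then have "p = q"
    using antisym_P[of p q] assms \<open>le q q'\<close> level_subset by blast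
  then show False
    using levels_disjoint i j \<open>i \<noteq> j\<close> assms(3,4) by blast
qed

lemma lev_lt_of_less:
  assumes "i \<in> {1..k}" "j \<in> {1..k}" "p \<in> A i" "q \<in> A j" "less_of le p q"
  shows "lev_lt i j"
proof -
  have "i \<noteq> j"
    using level_antichain assms unfolding less_of_def by blast
  then show ?thesis
    using lev_le_of_le[OF assms(1-4)] assms(1,2,5) lev_lt_iff unfolding less_of_def by blast
qed

lemma lev_lt_exists_above:
  assumes "i \<in> {1..k}" "j \<in> {1..k}" "lev_lt i j" "x \<in> A i"
  shows "\<exists>y\<in>A j. less_of le x y"
proof -
  obtain y where "y \<in> A j" "le x y"
    using lev_le_exists_above assms(3,4) unfolding sqlt_def by blast
  moreover have "x \<noteq> y"
    using calculation levels_disjoint assms lev_lt_iff by blast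
  ultimately show ?thesis unfolding less_of_def by blast
qed

lemma lev_lt_exists_below:
  assumes i: "i \<in> {1..k}" and j: "j \<in> {1..k}" and "lev_lt i j" "y \<in> A j"
  shows "\<exists>x\<in>A i. less_of le x y"
proof (rule ccontr)
  assume none: "\<not> (\<exists>x\<in>A i. less_of le x y)"
  have "y \<notin> A i" "y \<in> P"
    using assms levels_disjoint lev_lt_iff level_subset by blast+
  have not_below: "\<not> le x y" if "x \<in> A i" for x
    using none that \<open>y \<notin> A i\<close> unfolding less_of_def by blast
  have not_above: "\<not> le y x" if x: "x \<in> A i" for x
  proof
    assume "le y x"
    obtain y' where "y' \<in> A j" "le x y'"
      using lev_le_exists_above assms(3) x unfolding sqlt_def by blast
    then have "le y y'"
      using trans_P[of y x y'] level_subset i j \<open>y \<in> P\<close> x \<open>le y x\<close> by blast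
    then have "y = y'"
      using level_antichain[OF j] \<open>y \<in> A j\<close> \<open>y' \<in> A j\<close> by blast
    then have "x = y"
      using antisym_P[of x y] \<open>le y x\<close> \<open>le x y'\<close> \<open>y \<in> P\<close> level_subset i x by blast
    then show False using x \<open>y \<notin> A i\<close> by blast
  qed
  have "antichain_on P le (insert y (A i))"
    unfolding antichain_on_def
    using level_antichain[OF i] level_subset[OF i] \<open>y \<in> P\<close> not_below not_above by blast
  then have "card (insert y (A i)) \<le> w"
    using card_le_width finite_P by blast
  then show False
    using card_level[OF i] finite_level[OF i] \<open>y \<notin> A i\<close> by simp
qed

definition level :: "'a \<Rightarrow> nat" where
  "level p = (THE i. i \<in> {1..k} \<and> p \<in> A i)"

lemma level_eq: "i \<in> {1..k} \<Longrightarrow> p \<in> A i \<Longrightarrow> level p = i"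
  unfolding level_def using levels_disjoint by (intro the_equality) blast+

lemma level_mem: "p \<in> P \<Longrightarrow> level p \<in> {1..k} \<and> p \<in> A (level p)"
  using levels_cover level_eq by blast

lemma consecD:
  assumes "consec P le A t p s" "t \<le> k"
  shows "p \<in> {1..k}" "s \<in> {1..k}" "lev_lt p s" "p \<le> t" "s \<le> t"
  using assms unfolding consec_def by auto

lemma consec_restrict: "consec P le A t p s \<Longrightarrow> max p s \<le> t' \<Longrightarrow> t' \<le> t \<Longrightarrow> consec P le A t' p s"
  unfolding consec_def by auto

lemma consec_iff_rank:
  assumes "t \<le> k"
  shows "consec P le A t p s \<longleftrightarrow> p \<in> {1..t} \<and> s \<in> {1..t} \<and> rank p < rank s
    \<and> \<not> (\<exists>q\<in>{1..t}. rank p < rank q \<and> rank q < rank s)"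
proof -
  have "lev_lt i j \<longleftrightarrow> rank i < rank j" if "i \<in> {1..t}" "j \<in> {1..t}" for i j
    using that assms lev_lt_iff_rank by simp
  then show ?thesis
    unfolding consec_def by blast
qed

lemma consec_rank_between:
  "consec P le A t p s \<Longrightarrow> t \<le> k \<Longrightarrow> q \<in> {1..t} \<Longrightarrow> rank q \<le> rank p \<or> rank s \<le> rank q"
  using consec_iff_rank by (meson not_le)

lemma consec_succ_unique:
  assumes "consec P le A k j s" "consec P le A k j s'"
  shows "s = s'"
proof -
  have "rank s \<le> rank s'" "rank s' \<le> rank s"
    using consec_rank_between[OF assms(1), of s'] consec_rank_between[OF assms(2), of s]
      consec_iff_rank assms by fastforce+
  then show ?thesis
    using rank_eq_iff consecD assms by (meson order_antisym order_refl)
qed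

lemma rank_first_less:
  assumes "i \<in> {1..k}" "i \<noteq> 1"
  shows "rank 1 < rank i"
proof -
  have "1 \<in> {1..k}" using two_le_k by simp
  moreover have "lev_le 1 i" using levels_bounds assms(1) by blast
  ultimately show ?thesis
    using assms lev_lt_iff lev_lt_iff_rank by metis
qed

lemma rank_less_second:
  assumes "i \<in> {1..k}" "i \<noteq> 2"
  shows "rank i < rank 2"
proof -
  have "2 \<in> {1..k}" using two_le_k by simp
  moreover have "lev_le i 2" using levels_bounds assms(1) by blast
  ultimately show ?thesis
    using assms lev_lt_iff lev_lt_iff_rank by metis
qed

lemma consec_pred_exists:
  assumes "i \<in> {1..k}" "i \<noteq> 1"
  shows "\<exists>j. consec P le A k j i"
proof -
  let ?L = "\<lambda>j. j \<in> {1..k} \<and> rank j < rank i"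
  have "?L 1" using rank_first_less assms two_le_k by auto
  then obtain j where j: "?L j" "\<And>q. ?L q \<Longrightarrow> rank q \<le> rank j"
    using ex_has_greatest_nat[of ?L 1 rank "Suc k"] rank_le by (metis le_imp_less_Suc)
  then have "consec P le A k j i"
    unfolding consec_iff_rank[OF order_refl] using assms by (meson leD)
  then show ?thesis ..
qed

lemma level_inserted:
  assumes m: "m \<in> {3..k}"
  shows "\<exists>p s. consec P le A (m - 1) p s \<and> rank p < rank m \<and> rank m < rank s"
proof -
  let ?L = "\<lambda>q. q \<in> {1..m - 1} \<and> rank q < rank m"
    and ?U = "\<lambda>q. q \<in> {1..m - 1} \<and> rank m < rank q"
  have "?L 1" "?U 2"
    using m rank_first_less rank_less_second by auto
  obtain p where p: "?L p" "\<And>q. ?L q \<Longrightarrow> rank q \<le> rank p"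
    using ex_has_greatest_nat[of ?L 1 rank "Suc k"] \<open>?L 1\<close> rank_le by (metis le_imp_less_Suc)
  obtain s where s: "?U s" "\<And>q. ?U q \<Longrightarrow> rank s \<le> rank q"
    using ex_has_least_nat[of ?U 2 rank] \<open>?U 2\<close> by metis
  have "\<not> (\<exists>q\<in>{1..m - 1}. rank p < rank q \<and> rank q < rank s)"
  proof
    assume "\<exists>q\<in>{1..m - 1}. rank p < rank q \<and> rank q < rank s"
    then obtain q where q: "q \<in> {1..m - 1}" "rank p < rank q" "rank q < rank s" by blast
    have "q \<in> {1..k}" "q \<noteq> m" using q(1) m by auto
    then have "rank q \<noteq> rank m" using rank_eq_iff[of q m] m by simp
    then consider "rank q < rank m" | "rank m < rank q" by linarith
    then show False
      using p(2)[of q] s(2)[of q] q by cases auto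
  qed
  moreover have "m - 1 \<le> k" "rank p < rank s" using m p(1) s(1) by auto
  ultimately have "consec P le A (m - 1) p s"
    using consec_iff_rank p(1) s(1) by blast
  then show ?thesis using p s by blast
qed

definition up_count :: "'a \<Rightarrow> nat \<Rightarrow> nat" where
  "up_count v i = card {q \<in> A i. le v q}"

lemma up_count_mono:
  assumes "v \<in> P" "i \<in> {1..k}" "j \<in> {1..k}" "lev_le i j"
  shows "up_count v i \<le> up_count v j"
  unfolding up_count_def
proof (rule card_above_mono[OF poset \<open>v \<in> P\<close>])
  show "antichain_on P le (A i)" "maximum_antichain P le (A j)"
    using levels_maximum assms(2,3) unfolding maximum_antichain_def by blast+
  show "A i \<subseteq> down_set P le (A j)"
    using assms(4) unfolding sqle_def .
qed

lemma up_count_less: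
  assumes "v \<in> P" "t \<in> {2..k}" "consec P le A t p s"
    and "a \<in> A p" "b \<in> A s" "less_of le a b" "\<not> le v a" "le v b"
  shows "up_count v p < up_count v s"
proof -
  have I: "p \<in> {1..k}" "s \<in> {1..k}"
    using consecD[OF assms(3)] assms(2) by auto
  obtain f where f: "bij_betw f (A p) (A s)" "\<forall>x\<in>A p. less_of le x (f x)" "f a = b"
    using levels_regular assms(2-6) unfolding bip_regular_def by blast
  show ?thesis
    unfolding up_count_def
    using card_above_less_along_matching[OF poset \<open>v \<in> P\<close> level_subset[OF I(1)]
        level_subset[OF I(2)] f(1)] f(2,3) assms(4,7,8)
    unfolding less_of_def by blast
qed

lemma up_count_le_width: "i \<in> {1..k} \<Longrightarrow> up_count v i \<le> w"
  unfolding up_count_def using card_level finite_level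
  by (metis (no_types, lifting) card_mono mem_Collect_eq subsetI)

lemma up_count_pos: "i \<in> {1..k} \<Longrightarrow> q \<in> A i \<Longrightarrow> le v q \<Longrightarrow> 0 < up_count v i"
  unfolding up_count_def using finite_level by (auto simp: card_gt_0_iff)

section \<open>Chains along the perfect matchings\<close>

lemma consec_matching:
  assumes "consec P le A k j s"
  shows "\<exists>f. bij_betw f (A j) (A s) \<and> (\<forall>x\<in>A j. less_of le x (f x))"
proof -
  have j: "j \<in> {1..k}" "s \<in> {1..k}" "lev_lt j s"
    using consecD[OF assms order_refl] by auto
  obtain x where x: "x \<in> A j"
    using levels_nonempty j(1) by blast
  obtain y where y: "y \<in> A s" "less_of le x y"
    using lev_lt_exists_above[OF j x] by blast
  have "k \<in> {2..k}"
    using two_le_k by simp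
  then have "bip_regular le (A j) (A s)"
    using levels_regular assms by blast
  then show ?thesis
    using x y unfolding bip_regular_def by blast
qed

definition matching :: "nat \<Rightarrow> 'a \<Rightarrow> 'a" where
  "matching j = (SOME f. \<exists>s. consec P le A k j s
     \<and> bij_betw f (A j) (A s) \<and> (\<forall>x\<in>A j. less_of le x (f x)))"

lemma matching:
  assumes "consec P le A k j s"
  shows "bij_betw (matching j) (A j) (A s)" and "\<forall>x\<in>A j. less_of le x (matching j x)"
proof -
  have "\<exists>f s. consec P le A k j s \<and> bij_betw f (A j) (A s) \<and> (\<forall>x\<in>A j. less_of le x (f x))"
    using consec_matching assms by blast
  then have "\<exists>s. consec P le A k j s
      \<and> bij_betw (matching j) (A j) (A s) \<and> (\<forall>x\<in>A j. less_of le x (matching j x))"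
    unfolding matching_def by (rule someI_ex)
  then obtain s' where "consec P le A k j s'" "bij_betw (matching j) (A j) (A s')"
    "\<forall>x\<in>A j. less_of le x (matching j x)"
    by blast
  moreover have "s' = s"
    using consec_succ_unique assms calculation(1) by blast
  ultimately show "bij_betw (matching j) (A j) (A s)" "\<forall>x\<in>A j. less_of le x (matching j x)"
    by simp_all
qed

text \<open>On the top level \<open>A 2\<close>, which has no successor, \<open>chain_succ\<close> is the identity.\<close>

definition chain_succ :: "'a \<Rightarrow> 'a" where
  "chain_succ p = (if \<exists>s. consec P le A k (level p) s then matching (level p) p else p)"

lemma chain_succ:
  assumes "p \<in> P"
  shows "chain_succ p \<in> P" and "le p (chain_succ p)"
proof -
  have "chain_succ p \<in> P \<and> le p (chain_succ p)"
  proof (cases "\<exists>s. consec P le A k (level p) s")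
    case True
    then obtain s where s: "consec P le A k (level p) s" by blast
    have p: "p \<in> A (level p)"
      using level_mem assms by blast
    have "chain_succ p = matching (level p) p"
      using True unfolding chain_succ_def by simp
    moreover have "matching (level p) p \<in> A s"
      using matching(1)[OF s] p by (rule bij_betw_apply)
    moreover have "less_of le p (matching (level p) p)"
      using matching(2)[OF s] p by blast
    moreover have "A s \<subseteq> P"
      using level_subset consecD(2)[OF s order_refl] by blast
    ultimately show ?thesis
      unfolding less_of_def by auto
  next
    case False
    then show ?thesis
      using refl_P assms unfolding chain_succ_def by auto
  qed
  then show "chain_succ p \<in> P" "le p (chain_succ p)" by blast+
qed

lemma funpow_chain_succ_mem: "p \<in> P \<Longrightarrow> (chain_succ ^^ n) p \<in> P"
  by (induction n) (simp_all add: chain_succ(1))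

lemma funpow_chain_succ_mono:
  assumes "p \<in> P" "n \<le> m"
  shows "le ((chain_succ ^^ n) p) ((chain_succ ^^ m) p)"
  using assms(2)
proof (induction m rule: dec_induct)
  case base
  then show ?case using refl_P funpow_chain_succ_mem assms(1) by blast
next
  case (step m)
  have "le ((chain_succ ^^ m) p) ((chain_succ ^^ Suc m) p)"
    using chain_succ(2) funpow_chain_succ_mem assms(1) by simp
  with step.IH show ?case
    using trans_P funpow_chain_succ_mem[OF assms(1)] by blast
qed

lemma chain_reaches:
  assumes "p \<in> P"
  shows "\<exists>b\<in>A 1. \<exists>n. (chain_succ ^^ n) b = p"
  using assms
proof (induction "rank (level p)" arbitrary: p rule: less_induct)
  case less
  have p: "level p \<in> {1..k}" "p \<in> A (level p)"
    using level_mem less.prems by auto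
  show ?case
  proof (cases "level p = 1")
    case True
    have "p \<in> A 1" "(chain_succ ^^ 0) p = p"
      using True p(2) by simp_all
    then show ?thesis by blast
  next
    case False
    then obtain j where j: "consec P le A k j (level p)"
      using consec_pred_exists p by blast
    have "p \<in> matching j ` A j"
      using bij_betw_imp_surj_on[OF matching(1)[OF j]] p(2) by simp
    then obtain q where q: "q \<in> A j" "matching j q = p"
      by blast
    have "j \<in> {1..k}" "rank j < rank (level p)"
      using consecD[OF j order_refl] lev_lt_iff_rank p by auto
    then have "level q = j" "q \<in> P"
      using level_eq q level_subset by auto
    then have "chain_succ q = p"
      using j q unfolding chain_succ_def by auto
    moreover obtain b n where "b \<in> A 1" "(chain_succ ^^ n) b = q"
      using less.hyps[of q] \<open>rank j < rank (level p)\<close> \<open>level q = j\<close> \<open>q \<in> P\<close> by auto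
    ultimately have "(chain_succ ^^ Suc n) b = p" by simp
    then show ?thesis using \<open>b \<in> A 1\<close> by blast
  qed
qed

definition chain_root :: "'a \<Rightarrow> 'a" where
  "chain_root p = (SOME b. b \<in> A 1 \<and> (\<exists>n. (chain_succ ^^ n) b = p))"

lemma chain_root:
  assumes "p \<in> P"
  shows "chain_root p \<in> A 1" and "\<exists>n. (chain_succ ^^ n) (chain_root p) = p"
proof -
  have "\<exists>b. b \<in> A 1 \<and> (\<exists>n. (chain_succ ^^ n) b = p)"
    using chain_reaches[OF assms] by blast
  then have "chain_root p \<in> A 1 \<and> (\<exists>n. (chain_succ ^^ n) (chain_root p) = p)"
    unfolding chain_root_def by (rule someI_ex)
  then show "chain_root p \<in> A 1" "\<exists>n. (chain_succ ^^ n) (chain_root p) = p"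
    by blast+
qed

lemma same_root_comparable:
  assumes "p \<in> P" "q \<in> P" "chain_root p = chain_root q"
  shows "le p q \<or> le q p"
proof -
  obtain n where n: "(chain_succ ^^ n) (chain_root p) = p"
    using chain_root(2)[OF assms(1)] by blast
  obtain m where m: "(chain_succ ^^ m) (chain_root p) = q"
    using chain_root(2)[OF assms(2)] assms(3) by auto
  have "1 \<in> {1..k}"
    using two_le_k by simp
  then have "chain_root p \<in> P"
    using chain_root(1)[OF assms(1)] level_subset by blast
  then show ?thesis
    using funpow_chain_succ_mono[of "chain_root p" n m] funpow_chain_succ_mono[of "chain_root p" m n]
    unfolding n m using nat_le_linear[of n m] by blast
qed

lemma same_root_le:
  assumes "p \<in> P" "q \<in> P" "chain_root p = chain_root q" "lev_le (level p) (level q)"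
  shows "le p q"
proof (rule ccontr)
  assume "\<not> le p q"
  then have "le q p"
    using same_root_comparable assms by blast
  have lv: "level p \<in> {1..k}" "p \<in> A (level p)" "level q \<in> {1..k}" "q \<in> A (level q)"
    using level_mem assms by auto
  then have "lev_le (level q) (level p)"
    using lev_le_of_le \<open>le q p\<close> by blast
  then have "level q = level p"
    using lev_le_antisym lv assms(4) by blast
  then have "q = p"
    using level_antichain[OF lv(3,4)] lv(2) \<open>le q p\<close> by simp
  then show False
    using \<open>\<not> le p q\<close> refl_P assms by blast
qed

section \<open>The node tree\<close>

lemma node_child_exists:
  assumes m: "m \<in> {3..k}"
    and g: "consec P le A (m - 1) p s" "rank p < rank m" "rank m < rank s"
    and N': "is_component le (A p) (A m) N' \<or> is_component le (A m) (A s) N'"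
  shows "\<exists>N. is_component le (A p) (A s) N \<and> node_child P le A k N' N"
proof -
  have I: "p \<in> {1..k}" "m \<in> {1..k}" "s \<in> {1..k}"
    using consecD[OF g(1)] m by auto
  have lt: "lev_lt p m" "lev_lt m s"
    using lev_lt_iff_rank I g(2,3) by auto
  have "p \<noteq> m" "m \<noteq> s" "p \<noteq> s"
    using g(2,3) by auto
  then have disj: "A p \<inter> A m = {}" "A p \<inter> A s = {}" "A m \<inter> A s = {}"
    using levels_disjoint I by blast+
  have sub: "A p \<subseteq> P" "A m \<subseteq> P" "A s \<subseteq> P"
    using level_subset I by blast+
  have pm: "\<forall>x\<in>A p. \<exists>y\<in>A m. less_of le x y" "\<forall>y\<in>A m. \<exists>x\<in>A p. less_of le x y"
    using lev_lt_exists_above[OF I(1,2) lt(1)] lev_lt_exists_below[OF I(1,2) lt(1)] by blast+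
  have ms: "\<forall>y\<in>A m. \<exists>z\<in>A s. less_of le y z" "\<forall>z\<in>A s. \<exists>y\<in>A m. less_of le y z"
    using lev_lt_exists_above[OF I(2,3) lt(2)] lev_lt_exists_below[OF I(2,3) lt(2)] by blast+
  have anti: "\<forall>x\<in>A p. \<forall>x'\<in>A p. le x x' \<longrightarrow> x = x'" "\<forall>z\<in>A s. \<forall>z'\<in>A s. le z z' \<longrightarrow> z = z'"
    using level_antichain I by blast+
  obtain N where N: "is_component le (A p) (A s) N" "node_int P le N' \<subset> node_int P le N"
  proof (cases "is_component le (A p) (A m) N'")
    case True
    have "\<forall>y\<in>A m. \<exists>z\<in>A s. le y z"
      using ms(1) unfolding less_of_def by blast
    then show ?thesis
      using parent_component_left[OF poset sub disj pm _ anti(2) True] that by blast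
  next
    case False
    then have "is_component le (A m) (A s) N'" using N' by blast
    moreover have "\<forall>y\<in>A m. \<exists>x\<in>A p. le x y"
      using pm(2) unfolding less_of_def by blast
    ultimately show ?thesis
      using parent_component_right[OF poset sub disj ms _ anti(1)] that by blast
  qed
  have "node_child P le A k N' N"
    unfolding node_child_def using m g(1) lt N' N by blast
  then show ?thesis using N(1) by blast
qed

lemma consec_newest_level:
  assumes m: "m \<in> {3..k}" and c': "consec P le A m p' s'" "m = max p' s'"
    and g: "consec P le A (m - 1) p s" "rank p < rank m" "rank m < rank s"
  shows "(p', s') = (p, m) \<or> (p', s') = (m, s)"
proof -
  have I': "p' \<in> {1..k}" "s' \<in> {1..k}" "rank p' < rank s'"
    using consecD[OF c'(1)] m lev_lt_iff_rank by auto
  have I: "p \<in> {1..k}" "s \<in> {1..k}" "p \<le> m - 1" "s \<le> m - 1" "m - 1 \<le> k"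
    using consecD[OF g(1)] m by auto
  have "m \<le> k" "p' \<noteq> s'"
    using m I'(3) by auto
  show ?thesis
  proof (cases "m = s'")
    case True
    then have "p' \<in> {1..m - 1}" "p \<in> {1..m}"
      using I I' c'(2) \<open>p' \<noteq> s'\<close> by auto
    then have "rank p' \<le> rank p \<or> rank s \<le> rank p'" "rank p \<le> rank p' \<or> rank s' \<le> rank p"
      using consec_rank_between[OF g(1) I(5)] consec_rank_between[OF c'(1) \<open>m \<le> k\<close>] by auto
    then have "rank p = rank p'"
      using g(2,3) I'(3) True by auto
    then show ?thesis
      using rank_eq_iff I I' True by auto
  next
    case False
    then have "m = p'" "s' \<in> {1..m - 1}" "s \<in> {1..m}"
      using I I' c'(2) \<open>p' \<noteq> s'\<close> by auto
    then have "rank s' \<le> rank p \<or> rank s \<le> rank s'" "rank s \<le> rank p' \<or> rank s' \<le> rank s"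
      using consec_rank_between[OF g(1) I(5)] consec_rank_between[OF c'(1) \<open>m \<le> k\<close>] by auto
    then have "rank s = rank s'"
      using g(2,3) I'(3) \<open>m = p'\<close> by auto
    then show ?thesis
      using rank_eq_iff I I' \<open>m = p'\<close> by auto
  qed
qed

lemma node_has_parent:
  assumes c': "consec P le A t p' s'" "t \<le> k" and m3: "3 \<le> max p' s'"
    and N': "is_component le (A p') (A s') N'"
  shows "\<exists>p s N. consec P le A (max p' s' - 1) p s
    \<and> rank p < rank (max p' s') \<and> rank (max p' s') < rank s
    \<and> is_component le (A p) (A s) N \<and> node_child P le A k N' N"
proof -
  define m where "m = max p' s'"
  have I': "p' \<in> {1..k}" "s' \<in> {1..k}" "p' \<le> t" "s' \<le> t"
    using consecD[OF c'] by auto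
  then have m: "m \<in> {3..k}"
    using m3 c'(2) unfolding m_def by auto
  have cm: "consec P le A m p' s'"
    using consec_restrict[OF c'(1)] I' unfolding m_def by auto
  obtain p s where g: "consec P le A (m - 1) p s" "rank p < rank m" "rank m < rank s"
    using level_inserted m by blast
  then have "is_component le (A p) (A m) N' \<or> is_component le (A m) (A s) N'"
    using consec_newest_level[OF m cm m_def] N' by auto
  then obtain N where "is_component le (A p) (A s) N" "node_child P le A k N' N"
    using node_child_exists[OF m g] by blast
  then show ?thesis
    using g unfolding m_def by blast
qed

lemma consec_nested_max_less:
  assumes c: "consec P le A t p s" "t \<le> k" and c': "consec P le A t' p' s'" "t' \<le> k"
    and nested: "rank p \<le> rank p'" "rank s' \<le> rank s" and "(p, s) \<noteq> (p', s')"
  shows "max p s < max p' s'"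
proof (rule ccontr)
  assume "\<not> max p s < max p' s'"
  then have in_range: "p' \<in> {1..max p s}" "s' \<in> {1..max p s}"
    using consecD[OF c'] by auto
  have c_max: "consec P le A (max p s) p s"
    using consec_restrict[OF c(1)] consecD[OF c] by auto
  have "rank p' < rank s'" "p \<in> {1..k}" "s \<in> {1..k}" "p' \<in> {1..k}" "s' \<in> {1..k}"
    using consecD[OF c'] consecD[OF c] lev_lt_iff_rank by auto
  then have "rank p' \<le> rank p" "rank s \<le> rank s'"
    using consec_rank_between[OF c_max] consecD[OF c] in_range nested by fastforce+
  then have "p = p'" "s = s'"
    using rank_eq_iff nested \<open>p \<in> {1..k}\<close> \<open>s \<in> {1..k}\<close> \<open>p' \<in> {1..k}\<close> \<open>s' \<in> {1..k}\<close>
    by (meson order_antisym)+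
  then show False using assms(7) by simp
qed

lemma node_has_ancestor:
  assumes "consec P le A t' p' s'" "t' \<le> k" "is_component le (A p') (A s') N'"
    and "consec P le A t p s" "t \<le> k" "rank p \<le> rank p'" "rank s' \<le> rank s" "(p, s) \<noteq> (p', s')"
  shows "\<exists>N. is_component le (A p) (A s) N \<and> (node_child P le A k)\<^sup>+\<^sup>+ N' N"
  using assms
proof (induction "max p' s'" arbitrary: p' s' t' N' rule: less_induct)
  \<comment> \<open>\<open>max p' s'\<close> is the stage at which the node \<open>N'\<close> was created\<close>
  case less
  define m where "m = max p' s'"
  have c: "p \<in> {1..k}" "s \<in> {1..k}" "rank p < rank s" "p \<le> t" "s \<le> t"
    using consecD[OF less.prems(4,5)] lev_lt_iff_rank by auto
  have c': "p' \<in> {1..k}" "s' \<in> {1..k}" "rank p' < rank s'"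
    using consecD[OF less.prems(1,2)] lev_lt_iff_rank by auto
  have "max p s < m"
    using consec_nested_max_less less.prems(1,2,4-8) unfolding m_def by blast
  moreover have "p \<noteq> s" using c(3) by auto
  ultimately have "3 \<le> m" using c by auto
  then obtain p'' s'' N'' where par: "consec P le A (m - 1) p'' s''"
    "rank p'' < rank m" "rank m < rank s''"
    "is_component le (A p'') (A s'') N''" "node_child P le A k N' N''"
    using node_has_parent[OF less.prems(1,2) _ less.prems(3)] unfolding m_def by blast
  have "rank p' \<le> rank m" "rank m \<le> rank s'"
    using c' unfolding m_def by (auto simp: max_def)
  moreover have "m - 1 \<le> k" "p \<in> {1..m - 1}" "s \<in> {1..m - 1}"
    using \<open>max p s < m\<close> c c' unfolding m_def by auto
  then have "rank p \<le> rank p'' \<or> rank s'' \<le> rank p" "rank s \<le> rank p'' \<or> rank s'' \<le> rank s"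
    using consec_rank_between[OF par(1)] by blast+
  ultimately have "rank p \<le> rank p''" "rank s'' \<le> rank s"
    using c(3) c'(3) less.prems(6,7) par(2,3) by linarith+
  show ?case
  proof (cases "(p, s) = (p'', s'')")
    case True
    then show ?thesis using par(4,5) by blast
  next
    case False
    have "max p'' s'' < m"
      using consecD[OF par(1) \<open>m - 1 \<le> k\<close>] \<open>3 \<le> m\<close> by auto
    then obtain N where "is_component le (A p) (A s) N" "(node_child P le A k)\<^sup>+\<^sup>+ N'' N"
      using less.hyps[OF _ par(1) \<open>m - 1 \<le> k\<close> par(4) less.prems(4,5) \<open>rank p \<le> rank p''\<close>
          \<open>rank s'' \<le> rank s\<close> False] unfolding m_def by blast
    then show ?thesis
      using par(5) tranclp_into_tranclp2 by metis
  qed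
qed

lemma nested_node_is_descendant:
  assumes N: "consec P le A t p s" "t \<le> k" "is_component le (A p) (A s) N" "a \<in> fst N" "b \<in> snd N"
    and N': "consec P le A t' p' s'" "t' \<le> k" "is_component le (A p') (A s') N'"
      "a' \<in> fst N'" "b' \<in> snd N'" "less_of le a' b'"
    and nested: "le a a'" "le b' b" and "(p, s) \<noteq> (p', s')"
  shows "(node_child P le A k)\<^sup>+\<^sup>+ N' N"
proof -
  have I: "p \<in> {1..k}" "s \<in> {1..k}" "p' \<in> {1..k}" "s' \<in> {1..k}" "p \<noteq> s"
    using consecD[OF N(1,2)] consecD[OF N'(1,2)] unfolding sqlt_def by auto
  have mem: "a \<in> A p" "b \<in> A s" "a' \<in> A p'" "b' \<in> A s'"
    using is_component_subset N(3-5) N'(3-5) by blast+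
  then have P: "a \<in> P" "b \<in> P" "a' \<in> P" "b' \<in> P"
    using level_subset I by blast+
  have "rank p \<le> rank p'" "rank s' \<le> rank s"
    using lev_le_of_le lev_le_iff_rank I mem nested by blast+
  then obtain N'' where N'': "is_component le (A p) (A s) N''" "(node_child P le A k)\<^sup>+\<^sup>+ N' N''"
    using node_has_ancestor[OF N'(1-3) N(1,2)] \<open>(p, s) \<noteq> (p', s')\<close> by blast
  have "b' \<in> node_int P le N'"
    using N'(4-6) P refl_P unfolding mem_node_int less_of_def by blast
  then have "b' \<in> node_int P le N''"
    using node_int_psubset_of_descendant[OF N''(2)] by blast
  moreover have "le a b'"
    using trans_P[of a a' b'] P nested(1) N'(6) unfolding less_of_def by blast
  then have "b' \<in> node_int P le N"
    using N(4,5) nested(2) P unfolding mem_node_int by blast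
  ultimately have "N'' = N"
    using node_int_disjoint[OF poset level_subset level_subset _ N''(1) N(3)] levels_disjoint I
    by blast
  then show ?thesis using N''(2) by simp
qed

section \<open>The edge poset\<close>

context
  fixes F :: "('a set \<times> 'a set) set"
  assumes ancestor_free: "ancestor_free P le A k F"
begin

lemma edge_setE:
  assumes "e \<in> edge_set le F"
  obtains N t p s where "N \<in> F" "t \<in> {2..k}" "consec P le A t p s" "is_component le (A p) (A s) N"
    "fst e \<in> fst N" "snd e \<in> snd N" "fst e \<in> A p" "snd e \<in> A s" "less_of le (fst e) (snd e)"
proof -
  obtain N where N: "N \<in> F" "fst e \<in> fst N" "snd e \<in> snd N" "less_of le (fst e) (snd e)"
    using assms unfolding edge_set_def by auto
  then have "N \<in> nodes P le A k"
    using ancestor_free unfolding ancestor_free_def by blast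
  then obtain t p s where "t \<in> {2..k}" "consec P le A t p s" "is_component le (A p) (A s) N"
    unfolding nodes_def by blast
  moreover have "fst e \<in> A p" "snd e \<in> A s"
    using is_component_subset[OF calculation(3)] N by auto
  ultimately show ?thesis using that N by blast
qed

lemma edge_set_subset: "edge_set le F \<subseteq> P \<times> P"
proof
  fix e assume "e \<in> edge_set le F"
  then obtain t p s where "t \<in> {2..k}" "consec P le A t p s" "fst e \<in> A p" "snd e \<in> A s"
    by (rule edge_setE)
  then show "e \<in> P \<times> P"
    using consecD level_subset by (metis atLeastAtMost_iff mem_Times_iff subsetD surjective_pairing)
qed

lemma edges_not_nested:
  assumes e: "e \<in> edge_set le F" and e': "e' \<in> edge_set le F" and "e \<noteq> e'"
    and nested: "le (fst e) (fst e')" "le (snd e') (snd e)"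
  shows False
proof -
  obtain N t p s where N: "N \<in> F" "t \<in> {2..k}" "consec P le A t p s" "is_component le (A p) (A s) N"
    "fst e \<in> fst N" "snd e \<in> snd N" "fst e \<in> A p" "snd e \<in> A s"
    using e by (rule edge_setE)
  obtain N' t' p' s' where N': "N' \<in> F" "t' \<in> {2..k}" "consec P le A t' p' s'"
    "is_component le (A p') (A s') N'" "fst e' \<in> fst N'" "snd e' \<in> snd N'"
    "fst e' \<in> A p'" "snd e' \<in> A s'" "less_of le (fst e') (snd e')"
    using e' by (rule edge_setE)
  have I: "p \<in> {1..k}" "s \<in> {1..k}" "p' \<in> {1..k}" "s' \<in> {1..k}" "t \<le> k" "t' \<le> k"
    using consecD N(2,3) N'(2,3) by auto
  show False
  proof (cases "(p, s) = (p', s')")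
    case True
    then have "fst e = fst e'" "snd e' = snd e"
      using level_antichain I N(7,8) N'(7,8) nested by auto
    then show False using \<open>e \<noteq> e'\<close> by (simp add: prod_eq_iff)
  next
    case False
    have "N' \<noteq> N"
    proof
      assume "N' = N"
      then have "fst e' \<in> A p" "snd e' \<in> A s"
        using N'(5,6) is_component_subset[OF N(4)] by auto
      then have "p' = p" "s' = s"
        using levels_disjoint I N'(7,8) by blast+
      then show False using False by simp
    qed
    moreover have "(node_child P le A k)\<^sup>+\<^sup>+ N' N"
      using nested_node_is_descendant[OF N(3) I(5) N(4,5,6) N'(3) I(6) N'(4,5,6,9) nested False] .
    ultimately show False
      using ancestor_free N(1) N'(1) unfolding ancestor_free_def by blast
  qed
qed

lemma edge_levels_ordered:
  assumes e: "e \<in> edge_set le F" and e': "e' \<in> edge_set le F"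
    and "le (fst e) (fst e')" "less_of le (snd e) (snd e')"
  shows "lev_le (level (snd e)) (level (fst e'))"
proof -
  obtain t p s where c: "t \<in> {2..k}" "consec P le A t p s" "fst e \<in> A p" "snd e \<in> A s"
    using e by (rule edge_setE)
  obtain t' p' s' where c': "t' \<in> {2..k}" "consec P le A t' p' s'" "fst e' \<in> A p'" "snd e' \<in> A s'"
    using e' by (rule edge_setE)
  have I: "p \<in> {1..k}" "s \<in> {1..k}" "p' \<in> {1..k}" "s' \<in> {1..k}" "t \<le> k" "t' \<le> k"
    using consecD c(1,2) c'(1,2) by auto
  have lv: "level (snd e) = s" "level (fst e') = p'"
    using level_eq I c(4) c'(3) by auto
  have "rank p \<le> rank p'" "rank s < rank s'"
    using lev_le_of_le[OF I(1,3) c(3) c'(3)] lev_lt_of_less[OF I(2,4) c(4) c'(4)] assms(3,4)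
      lev_le_iff_rank lev_lt_iff_rank I by auto
  have "rank s \<le> rank p'"
  proof (rule ccontr)
    assume "\<not> rank s \<le> rank p'"
    show False
    proof (cases "t \<le> t'")
      case True
      then have "s \<in> {1..t'}" using consecD[OF c(2) I(5)] I(2) by auto
      then show False
        using consec_rank_between[OF c'(2) I(6)] \<open>\<not> rank s \<le> rank p'\<close> \<open>rank s < rank s'\<close> by fastforce
    next
      case False
      then have "p' \<in> {1..t}" using consecD[OF c'(2) I(6)] I(3) by auto
      then have "rank p' \<le> rank p"
        using consec_rank_between[OF c(2) I(5)] \<open>\<not> rank s \<le> rank p'\<close> by fastforce
      then have "p = p'"
        using \<open>rank p \<le> rank p'\<close> rank_eq_iff I by (meson order_antisym)
      then have "fst e = fst e'"
        using level_antichain[OF I(1)] c(3) c'(3) assms(3) by blast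
      moreover have "e' \<noteq> e"
        using assms(4) unfolding less_of_def by blast
      ultimately show False
        using edges_not_nested[OF e' e] assms(4) refl_P level_subset I c(3)
        unfolding less_of_def by (metis subsetD)
    qed
  qed
  then show ?thesis
    using lev_le_iff_rank I lv by simp
qed

lemma up_count_increases:
  assumes e: "e \<in> edge_set le F" and e': "e' \<in> edge_set le F" and "e \<noteq> e'"
    and roots: "chain_root (fst e) = chain_root (fst e')" "chain_root (snd e) = chain_root (snd e')"
    and "lev_le (level (fst e)) (level (fst e'))"
    and v: "v \<in> P" "\<not> le v (fst e')" "le v (snd e')"
  shows "up_count v (level (snd e)) < up_count v (level (snd e'))"
proof -
  have P: "fst e \<in> P" "snd e \<in> P" "fst e' \<in> P" "snd e' \<in> P"
    using e e' edge_set_subset by auto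
  have "le (fst e) (fst e')"
    using same_root_le P roots(1) assms(6) by blast
  then have "\<not> le (snd e') (snd e)"
    using edges_not_nested[OF e e' \<open>e \<noteq> e'\<close>] by blast
  then have "less_of le (snd e) (snd e')"
    using same_root_comparable P roots(2) refl_P unfolding less_of_def by metis
  then have "lev_le (level (snd e)) (level (fst e'))"
    using edge_levels_ordered[OF e e' \<open>le (fst e) (fst e')\<close>] by blast
  then have "up_count v (level (snd e)) \<le> up_count v (level (fst e'))"
    using up_count_mono v(1) level_mem P by blast
  also have "\<dots> < up_count v (level (snd e'))"
  proof -
    obtain t p s where "t \<in> {2..k}" "consec P le A t p s" "fst e' \<in> A p" "snd e' \<in> A s"
      "less_of le (fst e') (snd e')"
      using e' by (rule edge_setE)
    moreover have "level (fst e') = p" "level (snd e') = s"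
      using calculation level_eq consecD by auto
    ultimately show ?thesis
      using up_count_less v by metis
  qed
  finally show ?thesis .
qed

definition root_class :: "('a \<times> 'a) set \<Rightarrow> 'a \<Rightarrow> 'a \<Rightarrow> ('a \<times> 'a) set" where
  "root_class C x y = {e \<in> C. chain_root (fst e) = x \<and> chain_root (snd e) = y}"

lemma root_class_least_edge_below:
  assumes C: "antichain_on (edge_set le F) (edge_le le) C"
    and e0: "e0 \<in> root_class C x y"
      "\<And>e. e \<in> root_class C x y \<Longrightarrow> rank (level (fst e0)) \<le> rank (level (fst e))"
    and e: "e \<in> root_class C x y"
  shows "le (fst e0) (fst e)" and "le (snd e0) (snd e)"
proof -
  have E: "e0 \<in> edge_set le F" "e \<in> edge_set le F"
    using C e0(1) e unfolding antichain_on_def root_class_def by blast+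
  then have P: "fst e0 \<in> P" "snd e0 \<in> P" "fst e \<in> P" "snd e \<in> P"
    using edge_set_subset by auto
  have roots: "chain_root (fst e0) = chain_root (fst e)" "chain_root (snd e0) = chain_root (snd e)"
    using e0(1) e unfolding root_class_def by auto
  have "lev_le (level (fst e0)) (level (fst e))"
    using e0(2)[OF e] lev_le_iff_rank level_mem P by blast
  then show "le (fst e0) (fst e)"
    using same_root_le P roots by blast
  then have "\<not> le (snd e) (snd e0) \<or> e = e0"
    using edges_not_nested E by blast
  then show "le (snd e0) (snd e)"
    using same_root_comparable P roots refl_P by metis
qed

lemma up_count_strict_mono_on_root_class:
  assumes C: "antichain_on (edge_set le F) (edge_le le) C"
    and e0: "e0 \<in> root_class C x y"
      "\<And>e. e \<in> root_class C x y \<Longrightarrow> rank (level (fst e0)) \<le> rank (level (fst e))"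
    and e: "e \<in> root_class C x y" "e' \<in> root_class C x y" "e \<noteq> e'"
      "lev_le (level (fst e)) (level (fst e'))"
  shows "up_count (snd e0) (level (snd e)) < up_count (snd e0) (level (snd e'))"
proof -
  have E: "e0 \<in> edge_set le F" "e \<in> edge_set le F" "e' \<in> edge_set le F"
    using C e0(1) e(1,2) unfolding antichain_on_def root_class_def by blast+
  then have P: "fst e \<in> P" "snd e0 \<in> P" "fst e' \<in> P"
    using edge_set_subset by auto
  have roots: "chain_root (fst e) = chain_root (fst e')" "chain_root (snd e) = chain_root (snd e')"
    using e(1,2) unfolding root_class_def by auto
  have "e' \<noteq> e0"
  proof
    assume "e' = e0"
    then have "le (fst e) (fst e0)"
      using same_root_le P roots e(4) by simp
    then show False
      using edges_not_nested[OF E(2,1)] root_class_least_edge_below[OF C e0 e(1)] \<open>e' = e0\<close> e(3)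
      by blast
  qed
  then have "\<not> le (snd e0) (fst e')"
    using C e0(1) e(2) unfolding antichain_on_def edge_le_def root_class_def by blast
  moreover have "le (snd e0) (snd e')"
    using root_class_least_edge_below[OF C e0 e(2)] by blast
  ultimately show ?thesis
    using up_count_increases[OF E(2,3) e(3) roots e(4) P(2)] by blast
qed

lemma root_class_card_le:
  assumes C: "antichain_on (edge_set le F) (edge_le le) C"
  shows "card (root_class C x y) \<le> w"
proof (cases "root_class C x y = {}")
  case True
  then show ?thesis by simp
next
  case False
  then obtain e where "e \<in> root_class C x y" by blast
  then obtain e0 where e0: "e0 \<in> root_class C x y"
    "\<And>e. e \<in> root_class C x y \<Longrightarrow> rank (level (fst e0)) \<le> rank (level (fst e))"
    using ex_has_least_nat[of "\<lambda>e. e \<in> root_class C x y" e "\<lambda>e. rank (level (fst e))"] by blast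
  have "C \<subseteq> P \<times> P"
    using C edge_set_subset unfolding antichain_on_def by blast
  then have "fst e \<in> P \<and> snd e \<in> P" if "e \<in> root_class C x y" for e
    using that unfolding root_class_def by (auto simp: mem_Times_iff)
  then have levels: "level (fst e) \<in> {1..k}" "level (snd e) \<in> {1..k}" "snd e \<in> A (level (snd e))"
    if "e \<in> root_class C x y" for e
    using that level_mem by blast+
  define g :: "'a \<times> 'a \<Rightarrow> nat" where "g e = up_count (snd e0) (level (snd e))" for e
  have "inj_on g (root_class C x y)"
  proof (rule inj_onI, rule ccontr)
    fix e e' assume "e \<in> root_class C x y" "e' \<in> root_class C x y" "g e = g e'" "e \<noteq> e'"
    then show False
      using up_count_strict_mono_on_root_class[OF C e0] levels levels_total unfolding g_def
      by (metis less_irrefl)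
  qed
  moreover have "g ` root_class C x y \<subseteq> {1..w}"
  proof
    fix n assume "n \<in> g ` root_class C x y"
    then obtain e where "e \<in> root_class C x y" "n = g e" by blast
    then show "n \<in> {1..w}"
      unfolding g_def using up_count_pos up_count_le_width levels root_class_least_edge_below[OF C e0]
      by (metis Suc_leI One_nat_def atLeastAtMost_iff)
  qed
  ultimately have "card (root_class C x y) \<le> card {1..w}"
    by (intro card_inj_on_le) auto
  then show ?thesis by simp
qed

lemma antichain_card_le:
  assumes C: "antichain_on (edge_set le F) (edge_le le) C"
  shows "card C \<le> w ^ 3"
proof -
  have "C \<subseteq> P \<times> P"
    using C edge_set_subset unfolding antichain_on_def by blast
  then have "finite C"
    using finite_subset finite_P by blast
  have "C \<subseteq> (\<Union>xy\<in>A 1 \<times> A 1. root_class C (fst xy) (snd xy))"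
    using \<open>C \<subseteq> P \<times> P\<close> chain_root(1) unfolding root_class_def by force
  moreover have fin: "finite (A 1)"
    using finite_level two_le_k by simp
  ultimately have "card C \<le> card (\<Union>xy\<in>A 1 \<times> A 1. root_class C (fst xy) (snd xy))"
    using \<open>finite C\<close> unfolding root_class_def by (intro card_mono) auto
  also have "\<dots> \<le> (\<Sum>xy\<in>A 1 \<times> A 1. card (root_class C (fst xy) (snd xy)))"
    by (rule card_UN_le) (rule finite_cartesian_product[OF fin fin])
  also have "\<dots> \<le> (\<Sum>xy\<in>A 1 \<times> A 1. w)"
    using root_class_card_le[OF C] by (intro sum_mono) auto
  also have "\<dots> = w ^ 3"
    using card_level[of 1] two_le_k by (simp add: card_cartesian_product power3_eq_cube)
  finally show ?thesis .
qed

end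

end

theorem lemma12:
  fixes P :: "'a set" and le :: "'a \<Rightarrow> 'a \<Rightarrow> bool" and A :: "nat \<Rightarrow> 'a set" and k :: nat
    and F :: "('a set \<times> 'a set) set"
  assumes "regular_poset P le A k"
    and "ancestor_free P le A k F"
  shows "width (edge_set le F) (edge_le le) \<le> (width P le) ^ 3"
proof -
  interpret regular_levels P le A k
    using assms(1) regular_poset_iff_regular_levels by blast
  show ?thesis
    using antichain_card_le[OF assms(2)] by (rule width_le)
qed

end
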